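(* Let $r\ge 2$ and $k\ge 3$ be integers and let $\widehat{F}_k$ be any $r$-coloring of the complete graph $K_k$. For every natural number $n$, there exists a complete multipartite graph on $n$ vertices which is $(r,\widehat{F}_k)$-extremal.
   Context: All graphs are finite and simple. An $r$-coloring of a graph is an arbitrary (not necessarily proper) assignment of colors from $\{1,\dots,r\}$ to its edges. The pattern of a colored graph is the partition of its edge set into (nonempty) color classes; names of colors are ignored. Given an $r$-coloring of a graph $G$, a copy of $\widehat{F}_k$ is a set of $k$ pairwise adjacent vertices of $G$ such that there is a bijection from these vertices to $V(K_k)$ under which two edges receive the same color in $G$ if and only if their images receive the same color in $\widehat{F}_k$ (i.e., the induced color pattern is isomorphic to that of $\widehat{F}_k$). A coloring of $G$ is $\widehat{F}_k$-free if it contains no copy of $\widehat{F}_k$. $c_{r,\widehat{F}_k}(G)$ denotes the number of $\widehat{F}_k$-free $r$-colorings of $E(G)$, and $c_{r,\widehat{F}_k}(n)$ is the maximum of $c_{r,\widehat{F}_k}(G)$ over all graphs $G$ on $n$ vertices. A graph $G$ on $n$ vertices is $(r,\widehat{F}_k)$-extremal if $c_{r,\widehat{F}_k}(G)=c_{r,\widehat{F}_k}(n)$. *)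

theory Defs
  imports "HOL-Library.FuncSet"
begin

definition pairs :: "'a set \<Rightarrow> 'a set set" where
  "pairs V = {e. e \<subseteq> V \<and> card e = 2}"

definition graph_on :: "nat \<Rightarrow> nat set set \<Rightarrow> bool" where
  "graph_on n E \<longleftrightarrow> E \<subseteq> pairs {..<n}"

definition colorings :: "nat \<Rightarrow> 'a set set \<Rightarrow> ('a set \<Rightarrow> nat) set" where
  "colorings r E = E \<rightarrow>\<^sub>E {1..r}"

definition has_copy :: "nat \<Rightarrow> (nat set \<Rightarrow> nat) \<Rightarrow> nat set set \<Rightarrow> (nat set \<Rightarrow> nat) \<Rightarrow> bool" where
  "has_copy k F E c \<longleftrightarrow>
     (\<exists>S phi. card S = k \<and> pairs S \<subseteq> E \<and> bij_betw phi S {..<k} \<and>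
        (\<forall>e\<in>pairs S. \<forall>e'\<in>pairs S. (c e = c e') \<longleftrightarrow> (F (phi ` e) = F (phi ` e'))))"

definition count_free :: "nat \<Rightarrow> nat \<Rightarrow> (nat set \<Rightarrow> nat) \<Rightarrow> nat set set \<Rightarrow> nat" where
  "count_free r k F E = card {c \<in> colorings r E. \<not> has_copy k F E c}"

definition max_count_free :: "nat \<Rightarrow> nat \<Rightarrow> (nat set \<Rightarrow> nat) \<Rightarrow> nat \<Rightarrow> nat" where
  "max_count_free r k F n = Max (count_free r k F ` {E. graph_on n E})"

definition extremal :: "nat \<Rightarrow> nat \<Rightarrow> (nat set \<Rightarrow> nat) \<Rightarrow> nat \<Rightarrow> nat set set \<Rightarrow> bool" where
  "extremal r k F n E \<longleftrightarrow> graph_on n E \<and> count_free r k F E = max_count_free r k F n"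

definition complete_multipartite :: "nat \<Rightarrow> nat set set \<Rightarrow> bool" where
  "complete_multipartite n E \<longleftrightarrow>
     (\<exists>p :: nat \<Rightarrow> nat. E = {{u, v} | u v. u < n \<and> v < n \<and> p u \<noteq> p v})"

end

theory Submission
  imports Defs Complex_Main "HOL-Combinatorics.Transposition"
begin

text \<open>Zykov symmetrization. Let \<open>u, v\<close> be non-adjacent vertices of a graph \<open>G\<close>. A copy of
  \<open>F\<close> is a clique, so it never contains both \<open>u\<close> and \<open>v\<close>; hence an \<open>F\<close>-free colouring of \<open>G\<close>
  is the same as a pair of \<open>F\<close>-free colourings of \<open>G - v\<close> and \<open>G - u\<close> agreeing on \<open>G - u - v\<close>.
  Fixing the colouring \<open>c\<^sub>0\<close> of \<open>G - u - v\<close> and writing \<open>a(c\<^sub>0)\<close>, \<open>b(c\<^sub>0)\<close> for the numbers of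
  extensions to \<open>G - v\<close> and \<open>G - u\<close>, the graph \<open>G\<close> has \<open>\<Sum> a b\<close> free colourings, while the
  graphs obtained by turning \<open>v\<close> into a twin of \<open>u\<close> (resp. \<open>u\<close> into a twin of \<open>v\<close>) have
  \<open>\<Sum> a\<^sup>2\<close> and \<open>\<Sum> b\<^sup>2\<close>. As \<open>2ab \<le> a\<^sup>2 + b\<^sup>2\<close>, one of the two twinned graphs is again
  extremal. Processing the vertices in order and twinning each new vertex with an earlier
  non-neighbour (or opening a new part if there is none) makes an extremal graph complete
  multipartite.\<close>

subsection \<open>Gluing colourings along a common subgraph\<close>

definition free_fiber ::
    "nat \<Rightarrow> ('a set set \<Rightarrow> ('a set \<Rightarrow> nat) \<Rightarrow> bool) \<Rightarrow> 'a set set \<Rightarrow> 'a set set \<Rightarrow> ('a set \<Rightarrow> nat)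
      \<Rightarrow> ('a set \<Rightarrow> nat) set" where
  "free_fiber r P H E0 c0 = {c \<in> colorings r H. \<not> P H c \<and> restrict c E0 = c0}"

lemma finite_colorings: "finite H \<Longrightarrow> finite (colorings r H)"
  unfolding colorings_def by (simp add: finite_PiE)

lemma bij_betw_free_fiber_Un:
  assumes loc: "\<And>H c c'. (\<And>e. e \<in> H \<Longrightarrow> c e = c' e) \<Longrightarrow> P H c = P H c'"
    and split: "\<And>c. P (H1 \<union> H2) c \<longleftrightarrow> P H1 c \<or> P H2 c"
  shows "bij_betw (\<lambda>c. (restrict c H1, restrict c H2))
           (free_fiber r P (H1 \<union> H2) (H1 \<inter> H2) c0)
           (free_fiber r P H1 (H1 \<inter> H2) c0 \<times> free_fiber r P H2 (H1 \<inter> H2) c0)"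
proof -
  define glue :: "('a set \<Rightarrow> nat) \<times> ('a set \<Rightarrow> nat) \<Rightarrow> 'a set \<Rightarrow> nat"
    where "glue = (\<lambda>(c1, c2). \<lambda>e. if e \<in> H1 then c1 e else if e \<in> H2 then c2 e else undefined)"
  show ?thesis
  proof (rule bij_betw_byWitness[where f' = glue])
    show "\<forall>c\<in>free_fiber r P (H1 \<union> H2) (H1 \<inter> H2) c0. glue (restrict c H1, restrict c H2) = c"
      unfolding free_fiber_def colorings_def glue_def
      by (auto simp: PiE_iff extensional_def fun_eq_iff)
    show "\<forall>p\<in>free_fiber r P H1 (H1 \<inter> H2) c0 \<times> free_fiber r P H2 (H1 \<inter> H2) c0.
            (restrict (glue p) H1, restrict (glue p) H2) = p"
      unfolding free_fiber_def colorings_def glue_def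
      by (auto simp: PiE_iff extensional_def fun_eq_iff)
    show "(\<lambda>c. (restrict c H1, restrict c H2)) ` free_fiber r P (H1 \<union> H2) (H1 \<inter> H2) c0
            \<subseteq> free_fiber r P H1 (H1 \<inter> H2) c0 \<times> free_fiber r P H2 (H1 \<inter> H2) c0"
    proof (rule image_subsetI)
      fix c assume c: "c \<in> free_fiber r P (H1 \<union> H2) (H1 \<inter> H2) c0"
      have "P H1 (restrict c H1) = P H1 c" "P H2 (restrict c H2) = P H2 c"
        by (rule loc; simp)+
      moreover have "restrict (restrict c H1) (H1 \<inter> H2) = restrict c (H1 \<inter> H2)"
        "restrict (restrict c H2) (H1 \<inter> H2) = restrict c (H1 \<inter> H2)"
        by (auto simp: fun_eq_iff)
      ultimately show "(restrict c H1, restrict c H2)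
          \<in> free_fiber r P H1 (H1 \<inter> H2) c0 \<times> free_fiber r P H2 (H1 \<inter> H2) c0"
        using c split unfolding free_fiber_def colorings_def by (auto simp: PiE_iff)
    qed
    show "glue ` (free_fiber r P H1 (H1 \<inter> H2) c0 \<times> free_fiber r P H2 (H1 \<inter> H2) c0)
            \<subseteq> free_fiber r P (H1 \<union> H2) (H1 \<inter> H2) c0"
    proof (rule image_subsetI, clarify)
      fix c1 c2
      assume c1: "c1 \<in> free_fiber r P H1 (H1 \<inter> H2) c0"
        and c2: "c2 \<in> free_fiber r P H2 (H1 \<inter> H2) c0"
      have agree: "c1 e = c2 e" if "e \<in> H1 \<inter> H2" for e
        using c1 c2 that unfolding free_fiber_def by (metis (mono_tags) mem_Collect_eq restrict_apply')
      have "P H1 (glue (c1, c2)) = P H1 c1" "P H2 (glue (c1, c2)) = P H2 c2"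
        by (rule loc; auto simp: glue_def agree)+
      moreover have "restrict (glue (c1, c2)) (H1 \<inter> H2) = restrict c1 (H1 \<inter> H2)"
        by (auto simp: glue_def fun_eq_iff)
      ultimately show "glue (c1, c2) \<in> free_fiber r P (H1 \<union> H2) (H1 \<inter> H2) c0"
        using c1 c2 split unfolding free_fiber_def colorings_def
        by (auto simp: glue_def PiE_iff extensional_def)
    qed
  qed
qed

lemma card_free_colorings_Un:
  assumes "finite H1" "finite H2"
    and loc: "\<And>H c c'. (\<And>e. e \<in> H \<Longrightarrow> c e = c' e) \<Longrightarrow> P H c = P H c'"
    and split: "\<And>c. P (H1 \<union> H2) c \<longleftrightarrow> P H1 c \<or> P H2 c"
  shows "card {c \<in> colorings r (H1 \<union> H2). \<not> P (H1 \<union> H2) c} =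
    (\<Sum>c0\<in>colorings r (H1 \<inter> H2).
        card (free_fiber r P H1 (H1 \<inter> H2) c0) * card (free_fiber r P H2 (H1 \<inter> H2) c0))"
proof -
  have partition: "{c \<in> colorings r (H1 \<union> H2). \<not> P (H1 \<union> H2) c}
      = (\<Union>c0\<in>colorings r (H1 \<inter> H2). free_fiber r P (H1 \<union> H2) (H1 \<inter> H2) c0)"
    unfolding free_fiber_def colorings_def by (auto simp: PiE_iff)
  have "card {c \<in> colorings r (H1 \<union> H2). \<not> P (H1 \<union> H2) c}
      = (\<Sum>c0\<in>colorings r (H1 \<inter> H2). card (free_fiber r P (H1 \<union> H2) (H1 \<inter> H2) c0))"
    unfolding partition using assms(1,2)
    by (intro card_UN_disjoint finite_colorings)
       (auto simp: free_fiber_def intro: finite_subset[OF _ finite_colorings])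
  also have "\<dots> = (\<Sum>c0\<in>colorings r (H1 \<inter> H2).
      card (free_fiber r P H1 (H1 \<inter> H2) c0) * card (free_fiber r P H2 (H1 \<inter> H2) c0))"
  proof (rule sum.cong[OF refl])
    fix c0
    have "bij_betw (\<lambda>c. (restrict c H1, restrict c H2))
           (free_fiber r P (H1 \<union> H2) (H1 \<inter> H2) c0)
           (free_fiber r P H1 (H1 \<inter> H2) c0 \<times> free_fiber r P H2 (H1 \<inter> H2) c0)"
      by (rule bij_betw_free_fiber_Un[where P = P, OF loc split])
    then show "card (free_fiber r P (H1 \<union> H2) (H1 \<inter> H2) c0)
        = card (free_fiber r P H1 (H1 \<inter> H2) c0) * card (free_fiber r P H2 (H1 \<inter> H2) c0)"
      by (simp add: bij_betw_same_card card_cartesian_product)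
  qed
  finally show ?thesis .
qed

lemma pairs_iff: "e \<in> pairs S \<longleftrightarrow> e \<subseteq> S \<and> card e = 2"
  by (simp add: pairs_def)

lemma has_copy_cong:
  assumes "\<And>e. e \<in> H \<Longrightarrow> c e = c' e"
  shows "has_copy k F H c = has_copy k F H c'"
proof -
  have "\<forall>e\<in>pairs S. \<forall>e'\<in>pairs S. c e = c e' \<longleftrightarrow> c' e = c' e'" if "pairs S \<subseteq> H" for S
    using assms that by (metis subsetD)
  then show ?thesis unfolding has_copy_def by metis
qed

lemma has_copy_mono: "has_copy k F H c \<Longrightarrow> H \<subseteq> H' \<Longrightarrow> has_copy k F H' c"
  unfolding has_copy_def by blast

lemma has_copy_Un_iff:
  assumes "u \<noteq> v" and "\<forall>e\<in>H1. v \<notin> e" and "\<forall>e\<in>H2. u \<notin> e"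
    and "{e \<in> H1. u \<notin> e} \<subseteq> H2" and "{e \<in> H2. v \<notin> e} \<subseteq> H1"
  shows "has_copy k F (H1 \<union> H2) c \<longleftrightarrow> has_copy k F H1 c \<or> has_copy k F H2 c"
proof
  assume "has_copy k F (H1 \<union> H2) c"
  then obtain S phi where S: "card S = k" "pairs S \<subseteq> H1 \<union> H2" "bij_betw phi S {..<k}"
    "\<forall>e\<in>pairs S. \<forall>e'\<in>pairs S. (c e = c e') \<longleftrightarrow> (F (phi ` e) = F (phi ` e'))"
    unfolding has_copy_def by blast
  have "{u, v} \<notin> pairs S"
    using S(2) assms(2,3) by blast
  then have "v \<notin> S \<or> u \<notin> S"
    using \<open>u \<noteq> v\<close> by (auto simp: pairs_iff)
  moreover have "pairs S \<subseteq> H1" if "v \<notin> S"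
  proof
    fix e assume "e \<in> pairs S"
    with S(2) assms(5) that show "e \<in> H1" unfolding pairs_def by blast
  qed
  moreover have "pairs S \<subseteq> H2" if "u \<notin> S"
  proof
    fix e assume "e \<in> pairs S"
    with S(2) assms(4) that show "e \<in> H2" unfolding pairs_def by blast
  qed
  ultimately have "pairs S \<subseteq> H1 \<or> pairs S \<subseteq> H2"
    by blast
  with S show "has_copy k F H1 c \<or> has_copy k F H2 c"
    unfolding has_copy_def by blast
qed (auto intro: has_copy_mono)

lemma mem_image_image_iff:
  assumes "\<And>x. g (g x) = x"
  shows "e \<in> (`) g ` G \<longleftrightarrow> g ` e \<in> G"
proof -
  have gg: "g ` g ` h = h" for h
    using assms by (simp add: image_image)
  show ?thesis
  proof
    assume "e \<in> (`) g ` G"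
    then show "g ` e \<in> G" by (auto simp: gg)
  next
    assume "g ` e \<in> G"
    then show "e \<in> (`) g ` G" by (rule image_eqI[where f = "(`) g", OF gg[symmetric]])
  qed
qed

lemma has_copy_image:
  assumes inv: "\<And>x. g (g x) = x" and copy: "has_copy k F ((`) g ` H) c"
  shows "has_copy k F H (c \<circ> (`) g)"
proof -
  obtain S phi where S: "card S = k" "pairs S \<subseteq> (`) g ` H" "bij_betw phi S {..<k}"
    "\<forall>e\<in>pairs S. \<forall>e'\<in>pairs S. (c e = c e') \<longleftrightarrow> (F (phi ` e) = F (phi ` e'))"
    using copy unfolding has_copy_def by blast
  have inj: "inj g" by (metis inj_def inv)
  have gg: "g ` g ` A = A" for A using inv by (simp add: image_image)
  have pairs_image: "e \<in> pairs (g ` S) \<longleftrightarrow> g ` e \<in> pairs S" for e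
  proof -
    have "e \<subseteq> g ` S \<longleftrightarrow> g ` e \<subseteq> S" by (metis gg image_mono)
    moreover have "card (g ` e) = card e" using inj by (simp add: card_image inj_on_subset)
    ultimately show ?thesis by (simp add: pairs_iff)
  qed
  have "card (g ` S) = k" using S(1) inj by (simp add: card_image inj_on_subset)
  moreover have "pairs (g ` S) \<subseteq> H"
  proof
    fix e assume "e \<in> pairs (g ` S)"
    then have "g ` e \<in> (`) g ` H" using pairs_image S(2) by blast
    then show "e \<in> H" by (metis gg image_iff)
  qed
  moreover have "bij_betw (phi \<circ> g) (g ` S) {..<k}"
    by (rule bij_betw_trans[OF _ S(3)]) (metis bij_betw_imageI gg inj inj_on_subset subset_UNIV)
  moreover have "\<forall>e\<in>pairs (g ` S). \<forall>e'\<in>pairs (g ` S).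
      (c \<circ> (`) g) e = (c \<circ> (`) g) e' \<longleftrightarrow> F ((phi \<circ> g) ` e) = F ((phi \<circ> g) ` e')"
    using S(4) pairs_image by (simp add: image_comp)
  ultimately show ?thesis unfolding has_copy_def by blast
qed

lemma has_copy_image_iff:
  assumes inv: "\<And>x. g (g x) = x"
  shows "has_copy k F ((`) g ` H) c \<longleftrightarrow> has_copy k F H (c \<circ> (`) g)"
proof
  assume "has_copy k F H (c \<circ> (`) g)"
  moreover have "(`) g ` (`) g ` H = H" and "c \<circ> (`) g \<circ> (`) g = c"
    using inv by (simp_all add: image_image fun_eq_iff)
  ultimately show "has_copy k F ((`) g ` H) c"
    using has_copy_image[OF inv, of k F "(`) g ` H" "c \<circ> (`) g"] by simp
qed (rule has_copy_image[OF inv])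

lemma restrict_image_mem_free_fiber:
  assumes inv: "\<And>x. g (g x) = x" and "E0 \<subseteq> G" and fixed: "\<And>e. e \<in> E0 \<Longrightarrow> g ` e = e"
    and c: "c \<in> free_fiber r (has_copy k F) ((`) g ` G) E0 c0"
  shows "restrict (c \<circ> (`) g) G \<in> free_fiber r (has_copy k F) G E0 c0"
proof -
  have "restrict (c \<circ> (`) g) G \<in> colorings r G"
    using c unfolding free_fiber_def colorings_def by (auto simp: PiE_iff)
  moreover have "has_copy k F G (restrict (c \<circ> (`) g) G) \<longleftrightarrow> has_copy k F ((`) g ` G) c"
    using has_copy_cong[of G "restrict (c \<circ> (`) g) G" "c \<circ> (`) g"] has_copy_image_iff[OF inv]
    by simp
  moreover have "restrict (restrict (c \<circ> (`) g) G) E0 = restrict c E0"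
    using \<open>E0 \<subseteq> G\<close> fixed by (auto simp: fun_eq_iff)
  ultimately show ?thesis
    using c unfolding free_fiber_def by simp
qed

lemma card_free_fiber_image:
  assumes inv: "\<And>x. g (g x) = x" and "E0 \<subseteq> G" and fixed: "\<And>e. e \<in> E0 \<Longrightarrow> g ` e = e"
  shows "card (free_fiber r (has_copy k F) ((`) g ` G) E0 c0) = card (free_fiber r (has_copy k F) G E0 c0)"
proof -
  have gg: "(`) g ` (`) g ` G = G"
    using inv by (simp add: image_image)
  have E0_sub: "E0 \<subseteq> (`) g ` G"
    using \<open>E0 \<subseteq> G\<close> fixed by (metis image_eqI subset_iff)
  have fwd_mem: "restrict (c \<circ> (`) g) G \<in> free_fiber r (has_copy k F) G E0 c0"
    if "c \<in> free_fiber r (has_copy k F) ((`) g ` G) E0 c0" for c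
    by (intro restrict_image_mem_free_fiber[of g E0 G] inv \<open>E0 \<subseteq> G\<close> fixed that)
  have back_mem: "restrict (c \<circ> (`) g) ((`) g ` G) \<in> free_fiber r (has_copy k F) ((`) g ` G) E0 c0"
    if "c \<in> free_fiber r (has_copy k F) G E0 c0" for c
  proof -
    have "c \<in> free_fiber r (has_copy k F) ((`) g ` (`) g ` G) E0 c0"
      using that by (simp only: gg)
    then show ?thesis
      by (intro restrict_image_mem_free_fiber[of g E0 "(`) g ` G"] inv E0_sub fixed)
  qed
  have inverse: "restrict (restrict (c \<circ> (`) g) H \<circ> (`) g) ((`) g ` H) = c"
    if "c \<in> extensional ((`) g ` H)" for c H
    using that inv by (auto simp: fun_eq_iff extensional_def image_image)
  have "bij_betw (\<lambda>c. restrict (c \<circ> (`) g) G)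
      (free_fiber r (has_copy k F) ((`) g ` G) E0 c0) (free_fiber r (has_copy k F) G E0 c0)"
  proof (rule bij_betw_byWitness[where f' = "\<lambda>c. restrict (c \<circ> (`) g) ((`) g ` G)"])
    show "\<forall>c\<in>free_fiber r (has_copy k F) ((`) g ` G) E0 c0.
        restrict (restrict (c \<circ> (`) g) G \<circ> (`) g) ((`) g ` G) = c"
      using inverse unfolding free_fiber_def colorings_def by (auto simp: PiE_iff)
    show "\<forall>c\<in>free_fiber r (has_copy k F) G E0 c0.
        restrict (restrict (c \<circ> (`) g) ((`) g ` G) \<circ> (`) g) G = c"
      using inverse[of _ "(`) g ` G"] unfolding free_fiber_def colorings_def gg by (auto simp: PiE_iff)
  qed (use fwd_mem back_mem in blast)+
  then show ?thesis
    by (rule bij_betw_same_card)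
qed

subsection \<open>Symmetrization at a non-edge\<close>

text \<open>The vertex \<open>v\<close> is deleted and re-inserted as a twin of \<open>u\<close>: every edge \<open>{u, y}\<close> with
  \<open>y \<noteq> v\<close> gets the companion \<open>{v, y}\<close>, and \<open>u\<close>, \<open>v\<close> stay non-adjacent.\<close>

definition clone :: "nat set set \<Rightarrow> nat \<Rightarrow> nat \<Rightarrow> nat set set" where
  "clone E u v = {e \<in> E. v \<notin> e} \<union> (`) (transpose u v) ` {e \<in> E. v \<notin> e}"

lemma mem_transpose_image_iff:
  "e \<in> (`) (transpose u v) ` {e \<in> E. v \<notin> e} \<longleftrightarrow> transpose u v ` e \<in> E \<and> u \<notin> e"
  unfolding mem_image_image_iff[of "transpose u v", OF transpose_involutory]
  by (simp add: in_transpose_image_iff)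

lemma clone_halves_Int:
  "{e \<in> E. v \<notin> e} \<inter> (`) (transpose u v) ` {e \<in> E. v \<notin> e} = {e \<in> E. u \<notin> e \<and> v \<notin> e}"
proof (intro equalityI subsetI)
  fix e assume "e \<in> {e \<in> E. v \<notin> e} \<inter> (`) (transpose u v) ` {e \<in> E. v \<notin> e}"
  then show "e \<in> {e \<in> E. u \<notin> e \<and> v \<notin> e}"
    unfolding Int_iff mem_transpose_image_iff by simp
next
  fix e assume "e \<in> {e \<in> E. u \<notin> e \<and> v \<notin> e}"
  then show "e \<in> {e \<in> E. v \<notin> e} \<inter> (`) (transpose u v) ` {e \<in> E. v \<notin> e}"
    unfolding Int_iff mem_transpose_image_iff by simp
qed

lemma has_copy_clone_iff:
  assumes "u \<noteq> v"
  shows "has_copy k F (clone E u v) c \<longleftrightarrow>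
    has_copy k F {e \<in> E. v \<notin> e} c \<or> has_copy k F ((`) (transpose u v) ` {e \<in> E. v \<notin> e}) c"
  unfolding clone_def
proof (rule has_copy_Un_iff[OF assms])
  show "\<forall>e\<in>{e \<in> E. v \<notin> e}. v \<notin> e"
    by simp
  show "\<forall>e\<in>(`) (transpose u v) ` {e \<in> E. v \<notin> e}. u \<notin> e"
  proof
    fix e assume "e \<in> (`) (transpose u v) ` {e \<in> E. v \<notin> e}"
    then show "u \<notin> e"
      unfolding mem_transpose_image_iff by simp
  qed
  show "{e \<in> {e \<in> E. v \<notin> e}. u \<notin> e} \<subseteq> (`) (transpose u v) ` {e \<in> E. v \<notin> e}"
  proof
    fix e assume "e \<in> {e \<in> {e \<in> E. v \<notin> e}. u \<notin> e}"
    then show "e \<in> (`) (transpose u v) ` {e \<in> E. v \<notin> e}"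
      unfolding mem_transpose_image_iff by simp
  qed
  show "{e \<in> (`) (transpose u v) ` {e \<in> E. v \<notin> e}. v \<notin> e} \<subseteq> {e \<in> E. v \<notin> e}"
  proof
    fix e assume "e \<in> {e \<in> (`) (transpose u v) ` {e \<in> E. v \<notin> e}. v \<notin> e}"
    then show "e \<in> {e \<in> E. v \<notin> e}"
      unfolding mem_Collect_eq mem_transpose_image_iff by auto
  qed
qed

lemma count_free_clone:
  assumes "u \<noteq> v" and "finite E"
  shows "count_free r k F (clone E u v) =
    (\<Sum>c0\<in>colorings r {e \<in> E. u \<notin> e \<and> v \<notin> e}.
      card (free_fiber r (has_copy k F) {e \<in> E. v \<notin> e} {e \<in> E. u \<notin> e \<and> v \<notin> e} c0) ^ 2)"
proof -
  define g where "g = transpose u v"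
  define G where "G = {e \<in> E. v \<notin> e}"
  define E0 where "E0 = {e \<in> E. u \<notin> e \<and> v \<notin> e}"
  have overlap: "G \<inter> (`) g ` G = E0"
    unfolding G_def E0_def g_def by (rule clone_halves_Int)
  have clone: "clone E u v = G \<union> (`) g ` G"
    unfolding clone_def G_def g_def ..
  have "count_free r k F (clone E u v) =
      (\<Sum>c0\<in>colorings r E0. card (free_fiber r (has_copy k F) G E0 c0)
        * card (free_fiber r (has_copy k F) ((`) g ` G) E0 c0))"
    unfolding count_free_def clone overlap[symmetric]
  proof (rule card_free_colorings_Un[where P = "has_copy k F"])
    show "finite G" "finite ((`) g ` G)"
      using \<open>finite E\<close> by (simp_all add: G_def)
    show "has_copy k F (G \<union> (`) g ` G) c \<longleftrightarrow> has_copy k F G c \<or> has_copy k F ((`) g ` G) c" for c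
      using has_copy_clone_iff[OF \<open>u \<noteq> v\<close>, of k F E c]
      unfolding clone G_def[symmetric] g_def[symmetric] .
  qed (fact has_copy_cong)
  also have "\<dots> = (\<Sum>c0\<in>colorings r E0. card (free_fiber r (has_copy k F) G E0 c0) ^ 2)"
  proof -
    have "card (free_fiber r (has_copy k F) ((`) g ` G) E0 c0) = card (free_fiber r (has_copy k F) G E0 c0)"
      for c0
      by (rule card_free_fiber_image) (auto simp: E0_def G_def g_def)
    then show ?thesis
      by (simp add: power2_eq_square)
  qed
  finally show ?thesis
    by (simp only: G_def E0_def)
qed

lemma count_free_eq_sum_fibers:
  assumes "u \<noteq> v" and "finite E" and "{u, v} \<notin> E" and "\<forall>e\<in>E. card e = 2"
  shows "count_free r k F E =
    (\<Sum>c0\<in>colorings r {e \<in> E. u \<notin> e \<and> v \<notin> e}.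
      card (free_fiber r (has_copy k F) {e \<in> E. v \<notin> e} {e \<in> E. u \<notin> e \<and> v \<notin> e} c0)
      * card (free_fiber r (has_copy k F) {e \<in> E. u \<notin> e} {e \<in> E. u \<notin> e \<and> v \<notin> e} c0))"
proof -
  define G1 where "G1 = {e \<in> E. v \<notin> e}"
  define G2 where "G2 = {e \<in> E. u \<notin> e}"
  have "\<not> (u \<in> e \<and> v \<in> e)" if "e \<in> E" for e
  proof
    assume uv: "u \<in> e \<and> v \<in> e"
    have "card e = 2"
      using assms(4) that by blast
    then obtain x y where "e = {x, y}"
      by (meson card_2_iff)
    with uv \<open>u \<noteq> v\<close> have "e = {u, v}"
      by auto
    with that \<open>{u, v} \<notin> E\<close> show False
      by simp
  qed
  then have partition: "E = G1 \<union> G2"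
    by (auto simp: G1_def G2_def)
  have overlap: "G1 \<inter> G2 = {e \<in> E. u \<notin> e \<and> v \<notin> e}"
    by (auto simp: G1_def G2_def)
  have "count_free r k F E = card {c \<in> colorings r (G1 \<union> G2). \<not> has_copy k F (G1 \<union> G2) c}"
    unfolding count_free_def partition[symmetric] ..
  also have "\<dots> = (\<Sum>c0\<in>colorings r (G1 \<inter> G2). card (free_fiber r (has_copy k F) G1 (G1 \<inter> G2) c0)
      * card (free_fiber r (has_copy k F) G2 (G1 \<inter> G2) c0))"
  proof (rule card_free_colorings_Un[where P = "has_copy k F"])
    show "finite G1" "finite G2"
      using \<open>finite E\<close> by (simp_all add: G1_def G2_def)
    show "has_copy k F (G1 \<union> G2) c \<longleftrightarrow> has_copy k F G1 c \<or> has_copy k F G2 c" for c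
      by (rule has_copy_Un_iff[OF \<open>u \<noteq> v\<close>]) (auto simp: G1_def G2_def)
  qed (fact has_copy_cong)
  finally show ?thesis
    unfolding overlap by (simp only: G1_def G2_def)
qed

lemma count_free_symmetrization:
  assumes "u \<noteq> v" and "finite E" and "{u, v} \<notin> E" and "\<forall>e\<in>E. card e = 2"
  shows "2 * count_free r k F E \<le> count_free r k F (clone E u v) + count_free r k F (clone E v u)"
proof -
  define E0 where "E0 = {e \<in> E. u \<notin> e \<and> v \<notin> e}"
  define a where "a c0 = card (free_fiber r (has_copy k F) {e \<in> E. v \<notin> e} E0 c0)" for c0
  define b where "b c0 = card (free_fiber r (has_copy k F) {e \<in> E. u \<notin> e} E0 c0)" for c0
  have E0_sym: "{e \<in> E. v \<notin> e \<and> u \<notin> e} = E0"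
    by (auto simp: E0_def)
  have am_gm: "2 * (a c0 * b c0) \<le> a c0 ^ 2 + b c0 ^ 2" for c0
  proof -
    have "real (2 * (a c0 * b c0)) \<le> real (a c0 ^ 2 + b c0 ^ 2)"
      using sum_squares_bound[of "real (a c0)" "real (b c0)"] by simp
    then show ?thesis
      by (simp only: of_nat_le_iff)
  qed
  have "2 * count_free r k F E = (\<Sum>c0\<in>colorings r E0. 2 * (a c0 * b c0))"
    unfolding count_free_eq_sum_fibers[OF assms] a_def b_def E0_def by (simp add: sum_distrib_left)
  also have "\<dots> \<le> (\<Sum>c0\<in>colorings r E0. a c0 ^ 2 + b c0 ^ 2)"
    by (rule sum_mono) (rule am_gm)
  also have "\<dots> = (\<Sum>c0\<in>colorings r E0. a c0 ^ 2) + (\<Sum>c0\<in>colorings r E0. b c0 ^ 2)"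
    by (rule sum.distrib)
  also have "(\<Sum>c0\<in>colorings r E0. a c0 ^ 2) = count_free r k F (clone E u v)"
    unfolding a_def E0_def by (rule count_free_clone[OF assms(1,2), symmetric])
  also have "(\<Sum>c0\<in>colorings r E0. b c0 ^ 2) = count_free r k F (clone E v u)"
    unfolding b_def E0_sym[symmetric] by (rule count_free_clone[OF assms(1)[symmetric] assms(2), symmetric])
  finally show ?thesis .
qed

lemma mem_clone_iff:
  assumes "v \<notin> e"
  shows "e \<in> clone E u v \<longleftrightarrow> e \<in> E"
  unfolding clone_def Un_iff mem_transpose_image_iff using assms by auto

lemma insert_mem_clone_iff:
  assumes "u \<noteq> v" and "y \<noteq> v" and "{u} \<notin> E"
  shows "{v, y} \<in> clone E u v \<longleftrightarrow> {u, y} \<in> E"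
proof -
  have "{v, y} \<in> clone E u v \<longleftrightarrow> {u, transpose u v y} \<in> E \<and> y \<noteq> u"
    unfolding clone_def Un_iff mem_transpose_image_iff using assms(1) by auto
  also have "\<dots> \<longleftrightarrow> {u, y} \<in> E"
    using assms by (cases "y = u") auto
  finally show ?thesis .
qed

lemma finite_pairs: "finite (pairs {..<n::nat})"
  unfolding pairs_def by (rule finite_subset[of _ "Pow {..<n}"]) auto

lemma finite_graphs_on: "finite {E. graph_on n E}"
  unfolding graph_on_def using finite_pairs by simp

lemma graph_on_finite: "graph_on n E \<Longrightarrow> finite E"
  unfolding graph_on_def by (rule finite_subset[OF _ finite_pairs])

lemma graph_on_card_edge: "graph_on n E \<Longrightarrow> e \<in> E \<Longrightarrow> card e = 2"
  unfolding graph_on_def pairs_def by auto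

lemma graph_on_no_loop: "graph_on n E \<Longrightarrow> {x} \<notin> E"
  using graph_on_card_edge by fastforce

lemma count_free_le_max_count_free: "graph_on n E \<Longrightarrow> count_free r k F E \<le> max_count_free r k F n"
  unfolding max_count_free_def using finite_graphs_on by (intro Max_ge) auto

lemma ex_extremal: "\<exists>E. extremal r k F n E"
proof -
  have "{E. graph_on n E} \<noteq> {}"
    by (auto simp: graph_on_def)
  then have "max_count_free r k F n \<in> count_free r k F ` {E. graph_on n E}"
    unfolding max_count_free_def using finite_graphs_on by (intro Max_in) auto
  then show ?thesis
    unfolding extremal_def by auto
qed

lemma graph_on_clone:
  assumes "graph_on n E" and "u < n" and "v < n"
  shows "graph_on n (clone E u v)"
  unfolding graph_on_def
proof
  fix e assume "e \<in> clone E u v"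
  then obtain h where h: "h \<in> E" and e: "e = h \<or> e = transpose u v ` h"
    unfolding clone_def by blast
  have "h \<subseteq> {..<n}" and "card h = 2"
    using assms(1) h unfolding graph_on_def pairs_def by auto
  moreover have "transpose u v ` h \<subseteq> {..<n}"
    using \<open>h \<subseteq> {..<n}\<close> assms(2,3) by (auto simp: transpose_def)
  moreover have "card (transpose u v ` h) = card h"
    by (simp add: card_image)
  ultimately show "e \<in> pairs {..<n}"
    using e by (auto simp: pairs_def)
qed

lemma extremal_clone:
  assumes "extremal r k F n E" and "u < n" and "v < n" and "u \<noteq> v" and "{u, v} \<notin> E"
  shows "extremal r k F n (clone E u v)"
proof -
  have graph: "graph_on n E" and max: "count_free r k F E = max_count_free r k F n"
    using assms(1) unfolding extremal_def by auto
  have "2 * count_free r k F E \<le> count_free r k F (clone E u v) + count_free r k F (clone E v u)"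
    using count_free_symmetrization[OF assms(4) graph_on_finite[OF graph] assms(5)]
      graph_on_card_edge[OF graph] by blast
  moreover have "count_free r k F (clone E u v) \<le> max_count_free r k F n"
    and "count_free r k F (clone E v u) \<le> max_count_free r k F n"
    using graph_on_clone[OF graph] assms(2,3) by (auto intro: count_free_le_max_count_free)
  ultimately have "count_free r k F (clone E u v) = max_count_free r k F n"
    using max by linarith
  then show ?thesis
    unfolding extremal_def using graph_on_clone[OF graph assms(2,3)] by simp
qed

subsection \<open>Building a complete multipartite extremal graph\<close>

definition multipartite_below :: "nat \<Rightarrow> nat set set \<Rightarrow> (nat \<Rightarrow> nat) \<Rightarrow> bool" where
  "multipartite_below m E p \<longleftrightarrow> (\<forall>x<m. \<forall>y<m. {x, y} \<in> E \<longleftrightarrow> p x \<noteq> p y)"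

lemma multipartite_below_Suc:
  assumes "{m} \<notin> E"
  shows "multipartite_below (Suc m) E p \<longleftrightarrow>
    multipartite_below m E p \<and> (\<forall>y<m. {m, y} \<in> E \<longleftrightarrow> p m \<noteq> p y)"
    (is "?L \<longleftrightarrow> ?R")
proof
  assume ?L
  then show ?R by (simp add: multipartite_below_def)
next
  assume R: ?R
  show ?L
    unfolding multipartite_below_def
  proof (intro allI impI)
    fix x y assume "x < Suc m" "y < Suc m"
    then consider "x < m" "y < m" | "x = m" "y = m" | "x = m" "y < m" | "x < m" "y = m"
      by linarith
    then show "{x, y} \<in> E \<longleftrightarrow> p x \<noteq> p y"
    proof cases
      case 4
      then show ?thesis using R insert_commute[of x m] by (auto simp: eq_commute)
    qed (use R assms in \<open>auto simp: multipartite_below_def\<close>)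
  qed
qed

lemma multipartite_below_Suc_clone:
  assumes "multipartite_below m E p" and "x < m" and "graph_on n E" and "m < n"
  shows "multipartite_below (Suc m) (clone E x m) (p(m := p x))"
proof -
  have "graph_on n (clone E x m)"
    using graph_on_clone[OF assms(3)] assms(2,4) by simp
  then have "{m} \<notin> clone E x m"
    by (rule graph_on_no_loop)
  moreover have "multipartite_below m (clone E x m) (p(m := p x))"
    using assms(1) unfolding multipartite_below_def by (simp add: mem_clone_iff)
  moreover have "{m, y} \<in> clone E x m \<longleftrightarrow> p x \<noteq> p y" if "y < m" for y
    using insert_mem_clone_iff[of x m y E] assms that graph_on_no_loop
    unfolding multipartite_below_def by auto
  ultimately show ?thesis
    by (simp add: multipartite_below_Suc)
qed

lemma multipartite_below_Suc_new_part:
  assumes "multipartite_below m E p" and "\<forall>y<m. {m, y} \<in> E" and "graph_on n E"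
  obtains q where "multipartite_below (Suc m) E (p(m := q))"
proof -
  obtain q where q: "q \<notin> p ` {..<m}"
    using ex_new_if_finite[OF infinite_UNIV_nat] by blast
  have "multipartite_below m E (p(m := q))"
    using assms(1) by (simp add: multipartite_below_def)
  moreover have "\<forall>y<m. {m, y} \<in> E \<longleftrightarrow> (p(m := q)) m \<noteq> (p(m := q)) y"
    using assms(2) q by auto
  ultimately have "multipartite_below (Suc m) E (p(m := q))"
    by (simp add: multipartite_below_Suc[OF graph_on_no_loop[OF assms(3)]])
  then show ?thesis
    by (rule that)
qed

lemma ex_extremal_multipartite_below:
  assumes "m \<le> n"
  shows "\<exists>E p. extremal r k F n E \<and> multipartite_below m E p"
  using assms
proof (induction m)
  case 0
  then show ?case
    using ex_extremal by (simp add: multipartite_below_def)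
next
  case (Suc m)
  then obtain E p where extremal: "extremal r k F n E" and multipartite: "multipartite_below m E p"
    by auto
  have graph: "graph_on n E"
    using extremal by (simp add: extremal_def)
  show ?case
  proof (cases "\<forall>y<m. {m, y} \<in> E")
    case True
    then show ?thesis
      using multipartite_below_Suc_new_part[OF multipartite True graph] extremal by blast
  next
    case False
    then obtain x where "x < m" and "{x, m} \<notin> E"
      by (auto simp: insert_commute)
    then show ?thesis
      using extremal_clone[OF extremal, of x m] multipartite_below_Suc_clone[OF multipartite _ graph]
        Suc.prems by auto
  qed
qed

lemma complete_multipartite_if_multipartite_below:
  assumes "graph_on n E" and "multipartite_below n E p"
  shows "complete_multipartite n E"
proof -
  have "E = {{u, v} | u v. u < n \<and> v < n \<and> p u \<noteq> p v}"
  proof (intro equalityI subsetI)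
    fix e assume "e \<in> E"
    then have "e \<subseteq> {..<n}" and "card e = 2"
      using assms(1) by (auto simp: graph_on_def pairs_def)
    then obtain u v where uv: "e = {u, v}" "u < n" "v < n"
      by (metis card_2_iff insert_subset lessThan_iff)
    with \<open>e \<in> E\<close> assms(2) have "p u \<noteq> p v"
      by (simp add: multipartite_below_def)
    with uv show "e \<in> {{u, v} | u v. u < n \<and> v < n \<and> p u \<noteq> p v}"
      by blast
  next
    fix e assume "e \<in> {{u, v} | u v. u < n \<and> v < n \<and> p u \<noteq> p v}"
    then obtain u v where "e = {u, v}" "u < n" "v < n" "p u \<noteq> p v"
      by blast
    with assms(2) show "e \<in> E"
      by (simp add: multipartite_below_def)
  qed
  then show ?thesis
    unfolding complete_multipartite_def by blast
qed

theorem theorem1p1: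
  fixes r k :: nat and F :: "nat set \<Rightarrow> nat"
  assumes "r \<ge> 2" and "k \<ge> 3"
    and "F \<in> colorings r (pairs {..<k})"
  shows "\<forall>n. \<exists>E. complete_multipartite n E \<and> extremal r k F n E"
proof
  fix n
  obtain E p where "extremal r k F n E" and "multipartite_below n E p"
    using ex_extremal_multipartite_below[of n n r k F] by blast
  moreover from this have "complete_multipartite n E"
    by (intro complete_multipartite_if_multipartite_below) (simp_all add: extremal_def)
  ultimately show "\<exists>E. complete_multipartite n E \<and> extremal r k F n E"
    by blast
qed

end
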